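(* Let $G$ be a finite abelian group and let $f$ be an automorphism of $\mathcal{P}_{0}(G)$ with pullback $g$. Then $g$ is an automorphism of $G$.
   Context: For an additively written finite abelian group $G$, $\mathcal{P}_{0}(G)$ is the monoid of all subsets of $G$ containing $0$, with setwise addition and identity $\{0\}$. Every automorphism $f$ of $\mathcal{P}_0(G)$ maps $2$-element sets to $2$-element sets; the pullback of $f$ is the bijection $g:G\to G$ defined by $g(0)=0$ and, for nonzero $a\in G$, by $f(\{0,a\})=\{0,g(a)\}$. *)

theory Defs
  imports Main
begin

definition setplus :: "'a::plus set \<Rightarrow> 'a set \<Rightarrow> 'a set" where
  "setplus A B = {a + b | a b. a \<in> A \<and> b \<in> B}"

definition P0 :: "'a::zero set set" where
  "P0 = {A. 0 \<in> A}"

definition P0_automorphism :: "('a::{zero,plus} set \<Rightarrow> 'a set) \<Rightarrow> bool" where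
  "P0_automorphism f \<longleftrightarrow>
     bij_betw f P0 P0 \<and>
     (\<forall>A\<in>P0. \<forall>B\<in>P0. f (setplus A B) = setplus (f A) (f B)) \<and>
     f {0} = {0}"

definition pullback :: "('a::zero set \<Rightarrow> 'a set) \<Rightarrow> 'a \<Rightarrow> 'a" where
  "pullback f a = (if a = 0 then 0 else (THE b. f {0, a} = {0, b}))"

definition group_automorphism :: "('a::plus \<Rightarrow> 'a) \<Rightarrow> bool" where
  "group_automorphism g \<longleftrightarrow> bij g \<and> (\<forall>x y. g (x + y) = g x + g y)"

end

theory Submission
  imports Defs
begin

(* An automorphism f of P0(G) fixes the absorbing element G, hence preserves the relation
   "X + A = G implies X + B = G", which says exactly that some translate of A lies in B.
   The two-element sets are the atoms of this preorder above {0}, so f permutes them and the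
   pullback g is a bijection with f {0, x} = {0, g x}.  Consequently f maps the set of subset
   sums of x_1, ..., x_n to that of g x_1, ..., g x_n, and every identity between such sets in G
   transfers to the images under g.
   If a + b + c = 0, the subset sums D of a, b, c coincide with those of -a, -b, -c.  On the
   image side this makes the subset sums of g a, g b, g c invariant under translation by
   t = g a + g b + g c; pulling back, D = {0, +-a, +-b, +-c} is invariant under translation by
   the preimage of t.  So t = 0 unless two of a, b, c satisfy one of the relations x = 0,
   2x = 0, y = x, y = 2x, and these cases follow from small identities such as
   {0,x} + {0,x} + {0,x} = {0,x} + {0,2x}. *)

lemma setplus_pair_left: "setplus {0, x} A = A \<union> (+) x ` (A::'a::monoid_add set)"
  unfolding setplus_def by (auto intro: exI[of _ 0])

lemma setplus_commute: "setplus A B = setplus B (A::'a::ab_semigroup_add set)"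
  unfolding setplus_def by (auto intro: add.commute)

lemma setplus_in_P0: "A \<in> P0 \<Longrightarrow> B \<in> P0 \<Longrightarrow> setplus A B \<in> (P0::'a::monoid_add set set)"
  unfolding P0_def setplus_def by (auto intro: exI[of _ 0])

lemma setplus_UNIV_left: "A \<in> P0 \<Longrightarrow> setplus UNIV A = (UNIV::'a::monoid_add set)"
  unfolding P0_def setplus_def by (metis (mono_tags, lifting) UNIV_eq_I UNIV_I add_0_right mem_Collect_eq)

lemma pair_in_P0 [simp]: "{0, x} \<in> P0"
  by (simp add: P0_def)

lemma two_le_card_if_P0:
  assumes "A \<in> P0" "A \<noteq> {0}" "finite A"
  shows "2 \<le> card A"
proof -
  obtain a where "a \<in> A" "a \<noteq> 0" using assms(1,2) by (auto simp: P0_def)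
  then have "card {0, a} \<le> card A" using assms(1,3) by (intro card_mono) (auto simp: P0_def)
  with \<open>a \<noteq> 0\<close> show ?thesis by simp
qed

definition translate_subset :: "'a::plus set \<Rightarrow> 'a set \<Rightarrow> bool" where
  "translate_subset A B \<longleftrightarrow> (\<exists>t. (+) t ` A \<subseteq> B)"

lemma translate_subset_iff_covering:
  fixes A B :: "'a::ab_group_add set"
  shows "translate_subset A B \<longleftrightarrow> (\<forall>X\<in>P0. setplus X A = UNIV \<longrightarrow> setplus X B = UNIV)"
proof
  assume "translate_subset A B"
  then obtain t where t: "(+) t ` A \<subseteq> B" unfolding translate_subset_def by blast
  show "\<forall>X\<in>P0. setplus X A = UNIV \<longrightarrow> setplus X B = UNIV"
  proof (intro ballI impI)
    fix X assume "setplus X A = UNIV"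
    have "z \<in> setplus X B" for z
    proof -
      from \<open>setplus X A = UNIV\<close> obtain x a where "x \<in> X" "a \<in> A" "z - t = x + a"
        unfolding setplus_def by blast
      moreover from this have "z = x + (t + a)" by (simp add: algebra_simps)
      ultimately show ?thesis using t unfolding setplus_def by blast
    qed
    then show "setplus X B = UNIV" by blast
  qed
next
  assume covering: "\<forall>X\<in>P0. setplus X A = UNIV \<longrightarrow> setplus X B = UNIV"
  show "translate_subset A B"
  proof (rule ccontr)
    assume no_fit: "\<not> translate_subset A B"
    then obtain h where h: "h \<notin> B" unfolding translate_subset_def by blast
    define X where "X = {y. h - y \<notin> B}"
    have "X \<in> P0" using h by (simp add: X_def P0_def)
    moreover have "setplus X A = UNIV"
    proof -
      have "z \<in> setplus X A" for z
      proof -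
        from no_fit obtain a where "a \<in> A" "h - z + a \<notin> B"
          unfolding translate_subset_def by blast
        then have "z - a \<in> X" "a \<in> A" by (simp_all add: X_def algebra_simps)
        then show ?thesis unfolding setplus_def by force
      qed
      then show ?thesis by blast
    qed
    moreover have "h \<notin> setplus X B"
      by (auto simp: setplus_def X_def)
    ultimately show False using covering by blast
  qed
qed

lemma translate_subset_finite_card_le:
  fixes A B :: "'a::group_add set"
  assumes "translate_subset A B" and "finite B"
  shows "finite A" and "card A \<le> card B"
proof -
  obtain t where t: "(+) t ` A \<subseteq> B" using assms(1) unfolding translate_subset_def by blast
  have inj: "inj_on ((+) t) A" by (simp add: inj_on_def)
  show "finite A" using finite_subset[OF t assms(2)] inj by (simp add: finite_image_iff)
  show "card A \<le> card B" using card_mono[OF assms(2) t] inj by (simp add: card_image)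
qed

definition translate_atom :: "'a::ab_group_add set \<Rightarrow> bool" where
  "translate_atom A \<longleftrightarrow>
     A \<noteq> {0} \<and> (\<forall>B\<in>P0. translate_subset B A \<longrightarrow> B = {0} \<or> translate_subset A B)"

lemma translate_atom_iff_card_eq_2:
  fixes A :: "'a::ab_group_add set"
  assumes "A \<in> P0"
  shows "translate_atom A \<longleftrightarrow> card A = 2"
proof
  assume atom: "translate_atom A"
  then obtain a where a: "a \<in> A" "a \<noteq> 0" using assms by (auto simp: P0_def translate_atom_def)
  have "translate_subset {0, a} A"
    unfolding translate_subset_def using a assms by (intro exI[of _ 0]) (simp add: P0_def)
  then have "translate_subset A {0, a}"
    using atom a unfolding translate_atom_def by auto
  then have "finite A" "card A \<le> 2"
    using translate_subset_finite_card_le[of A "{0, a}"] a by auto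
  moreover have "A \<noteq> {0}" using atom by (simp add: translate_atom_def)
  ultimately show "card A = 2" using two_le_card_if_P0[OF assms] by simp
next
  assume card: "card A = 2"
  then have "finite A" by (metis card.infinite zero_neq_numeral)
  have "translate_subset A B" if B: "B \<in> P0" "B \<noteq> {0}" "translate_subset B A" for B
  proof -
    obtain t where t: "(+) t ` B \<subseteq> A" using B(3) unfolding translate_subset_def by blast
    have "finite B" "card B \<le> 2"
      using translate_subset_finite_card_le[OF B(3) \<open>finite A\<close>] card by simp_all
    with B have "card ((+) t ` B) = card A"
      using two_le_card_if_P0[of B] card by (simp add: card_image inj_on_def)
    then have "(+) t ` B = A" using t \<open>finite A\<close> by (intro card_subset_eq)
    then have "(+) (- t) ` A = B" by (auto simp: image_image)
    then show ?thesis unfolding translate_subset_def by blast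
  qed
  moreover have "A \<noteq> {0}" using card by auto
  ultimately show "translate_atom A" unfolding translate_atom_def by blast
qed

primrec subset_sums :: "'a::monoid_add list \<Rightarrow> 'a set" where
  "subset_sums [] = {0}"
| "subset_sums (x # xs) = setplus {0, x} (subset_sums xs)"

declare subset_sums.simps(2) [simp del]

lemma subset_sums_Cons [simp]:
  "subset_sums (x # xs) = subset_sums xs \<union> (+) x ` subset_sums xs"
  by (simp add: subset_sums.simps(2) setplus_pair_left)

lemma subset_sums_in_P0 [simp]: "subset_sums xs \<in> P0"
  by (induction xs) (simp_all add: P0_def)

lemma subset_sums_map_uminus:
  fixes xs :: "'a::ab_group_add list"
  shows "subset_sums (map uminus xs) = (+) (- sum_list xs) ` subset_sums xs"
  by (induction xs) (auto simp: image_Un image_image algebra_simps)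

lemma subset_sums_eq_imp_double:
  fixes u w :: "'a::ab_group_add"
  assumes "subset_sums [u, u, u] = subset_sums [u, w]" and "u \<noteq> 0" and "w \<noteq> u"
  shows "w = u + u"
proof -
  have "w \<in> subset_sums [u, u, u]" unfolding assms(1) by simp
  moreover have "u + u \<in> subset_sums [u, w]" unfolding assms(1)[symmetric] by simp
  ultimately have "w \<in> {0, u, u + u, u + u + u}" "u + u \<in> {0, u, w, u + w}"
    by (auto simp: add.assoc)
  then show ?thesis using assms(2,3) by (auto simp: algebra_simps)
qed

lemma subset_sums_eq_imp_neg:
  fixes u y :: "'a::ab_group_add"
  assumes "subset_sums [y, u, u] = subset_sums [y, u + u]" and "u \<noteq> 0"
    and "y = u \<Longrightarrow> u + u = 0"
  shows "y = - u"
proof -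
  have "u \<in> subset_sums [y, u + u]" unfolding assms(1)[symmetric] by simp
  then have "u \<in> {0, y, u + u, y + (u + u)}" by auto
  then show ?thesis using assms(2,3) by (auto simp: algebra_simps eq_neg_iff_add_eq_0)
qed

lemma subset_sums_eq_imp_triple:
  fixes u w :: "'a::ab_group_add"
  assumes "subset_sums [u, u, w] = subset_sums [u, u, u, u, u]" and "u \<noteq> 0" and "w \<noteq> u + u"
    and "w = u \<Longrightarrow> u + u = 0" and "w = 0 \<Longrightarrow> u + u + u = 0"
  shows "w = u + u + u"
proof -
  have "w \<in> subset_sums [u, u, u, u, u]" unfolding assms(1)[symmetric] by simp
  moreover have "u + u + u \<in> subset_sums [u, u, w]" unfolding assms(1) by (simp add: add.assoc)
  ultimately have "w \<in> {0, u, u + u, u + u + u, u + u + u + u, u + u + u + u + u}"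
    "u + u + u \<in> {0, u, u + u, w, w + u, w + u + u}"
    by (auto simp: add.assoc add.commute add.left_commute)
  then show ?thesis using assms(2-5) by (auto simp: algebra_simps)
qed

lemma subset_sums_eq_imp_add:
  fixes u v w :: "'a::ab_group_add"
  assumes "subset_sums [u, v] = subset_sums [u, w]" and "u \<noteq> 0" "v \<noteq> 0" "w \<noteq> u" "w \<noteq> v"
  shows "w = u + v"
proof -
  have "w \<in> subset_sums [u, v]" unfolding assms(1) by simp
  moreover have "v \<in> subset_sums [u, w]" "u + v \<in> subset_sums [u, w]"
    unfolding assms(1)[symmetric] by simp_all
  ultimately have "w \<in> {0, u, v, u + v}" "v \<in> {0, u, w, u + w}" "u + v \<in> {0, u, w, u + w}"
    by auto
  then show ?thesis using assms(2-5) by (auto simp: algebra_simps)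
qed

definition degenerate_pair :: "'a::monoid_add \<Rightarrow> 'a \<Rightarrow> bool" where
  "degenerate_pair x y \<longleftrightarrow> x = 0 \<or> x + x = 0 \<or> y = x \<or> y = x + x"

lemma degenerate_pair_if_periodic:
  fixes a b c s :: "'a::ab_group_add"
  defines "D \<equiv> {0, a, b, c, - a, - b, - c}"
  assumes "a + b + c = 0" and "(+) s ` D \<subseteq> D" and "s = a \<or> s = - a"
  shows "degenerate_pair a b \<or> degenerate_pair b a"
proof -
  have c: "c = - (a + b)" using minus_unique[OF assms(2)] by simp
  have "s + b \<in> D" "s - b \<in> D" using assms(3) by (auto simp: D_def)
  with assms(4) have "a - b \<in> D \<or> b - a \<in> D" by auto
  then show ?thesis
    unfolding D_def c degenerate_pair_def by (auto simp: algebra_simps eq_neg_iff_add_eq_0)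
qed

locale P0_aut =
  fixes f :: "'a::ab_group_add set \<Rightarrow> 'a set"
  assumes P0_automorphism: "P0_automorphism f"
begin

lemma f_setplus: "A \<in> P0 \<Longrightarrow> B \<in> P0 \<Longrightarrow> f (setplus A B) = setplus (f A) (f B)"
  using P0_automorphism unfolding P0_automorphism_def by blast

lemma f_zero: "f {0} = {0}"
  using P0_automorphism unfolding P0_automorphism_def by blast

lemma f_image_P0: "f ` P0 = P0"
  using P0_automorphism unfolding P0_automorphism_def bij_betw_def by blast

lemma f_in_P0: "A \<in> P0 \<Longrightarrow> f A \<in> P0"
  using f_image_P0 by blast

lemma f_eq_iff: "A \<in> P0 \<Longrightarrow> B \<in> P0 \<Longrightarrow> f A = f B \<longleftrightarrow> A = B"
  using P0_automorphism unfolding P0_automorphism_def bij_betw_def inj_on_def by blast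

lemma f_UNIV: "f UNIV = UNIV"
proof -
  have UNIV_P0: "UNIV \<in> P0" by (simp add: P0_def)
  then obtain Z where Z: "Z \<in> P0" "f Z = UNIV" using f_image_P0 by (metis imageE)
  have "f UNIV = f (setplus UNIV Z)" using Z by (simp add: setplus_UNIV_left)
  also have "\<dots> = setplus UNIV (f UNIV)"
    using Z UNIV_P0 f_setplus[of UNIV Z] setplus_commute[of "f UNIV"] by simp
  also have "\<dots> = UNIV" by (rule setplus_UNIV_left[OF f_in_P0[OF UNIV_P0]])
  finally show ?thesis .
qed

lemma f_setplus_eq_UNIV_iff:
  "X \<in> P0 \<Longrightarrow> A \<in> P0 \<Longrightarrow> setplus (f X) (f A) = UNIV \<longleftrightarrow> setplus X A = UNIV"
proof -
  assume "X \<in> P0" "A \<in> P0"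
  moreover have "UNIV \<in> P0" by (simp add: P0_def)
  ultimately show ?thesis
    using f_eq_iff[of "setplus X A" UNIV] by (simp add: f_setplus setplus_in_P0 f_UNIV)
qed

lemma ball_P0_f_iff: "(\<forall>X\<in>P0. P (f X)) \<longleftrightarrow> (\<forall>Y\<in>P0. P Y)"
  using Ball_image_comp[of f P0 P] by (simp add: f_image_P0 comp_def)

lemma translate_subset_f_iff:
  assumes "A \<in> P0" "B \<in> P0"
  shows "translate_subset (f A) (f B) \<longleftrightarrow> translate_subset A B"
proof -
  have "translate_subset (f A) (f B) \<longleftrightarrow>
        (\<forall>X\<in>P0. setplus (f X) (f A) = UNIV \<longrightarrow> setplus (f X) (f B) = UNIV)"
    unfolding translate_subset_iff_covering by (rule ball_P0_f_iff[symmetric])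
  also have "\<dots> \<longleftrightarrow> translate_subset A B"
    unfolding translate_subset_iff_covering using assms by (simp add: f_setplus_eq_UNIV_iff)
  finally show ?thesis .
qed

lemma translate_atom_f_iff:
  assumes "A \<in> P0"
  shows "translate_atom (f A) \<longleftrightarrow> translate_atom A"
proof -
  have zero: "f B = {0} \<longleftrightarrow> B = {0}" if "B \<in> P0" for B
    using that f_eq_iff[of B "{0}"] by (simp add: f_zero P0_def)
  have "(\<forall>B\<in>P0. translate_subset B (f A) \<longrightarrow> B = {0} \<or> translate_subset (f A) B) \<longleftrightarrow>
        (\<forall>B\<in>P0. translate_subset (f B) (f A) \<longrightarrow> f B = {0} \<or> translate_subset (f A) (f B))"
    by (rule ball_P0_f_iff[symmetric])
  then show ?thesis
    unfolding translate_atom_def using assms zero by (simp add: translate_subset_f_iff)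
qed

lemma card_f_eq_2_iff: "A \<in> P0 \<Longrightarrow> card (f A) = 2 \<longleftrightarrow> card A = 2"
  by (metis translate_atom_f_iff translate_atom_iff_card_eq_2 f_in_P0)

abbreviation g where "g \<equiv> pullback f"

lemma f_pair: "f {0, x} = {0, g x}"
proof (cases "x = 0")
  case False
  have "card (f {0, x}) = 2" "0 \<in> f {0, x}"
    using False card_f_eq_2_iff f_in_P0[of "{0, x}"] by (simp_all add: P0_def)
  then obtain b where b: "f {0, x} = {0, b}" "b \<noteq> 0"
    unfolding card_2_iff by (auto, metis insert_commute)
  then have "(THE b. f {0, x} = {0, b}) = b"
    by (intro the_equality) (auto simp: doubleton_eq_iff)
  with b False show ?thesis by (simp add: pullback_def)
qed (simp add: f_zero pullback_def)

lemma pullback_0 [simp]: "g 0 = 0"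
  by (simp add: pullback_def)

lemma pullback_eq_iff [simp]: "g x = g y \<longleftrightarrow> x = y"
  using f_eq_iff[of "{0, x}" "{0, y}"] by (auto simp: f_pair doubleton_eq_iff P0_def)

lemma pullback_eq_0_iff [simp]: "g x = 0 \<longleftrightarrow> x = 0"
  using pullback_eq_iff[of x 0] by simp

lemma surj_pullback: "surj g"
proof -
  have "y \<in> range g" for y
  proof (cases "y = 0")
    case False
    obtain A where A: "A \<in> P0" "f A = {0, y}"
      using f_image_P0 by (metis P0_def imageE insertI1 mem_Collect_eq)
    then have "card A = 2" using False card_f_eq_2_iff[OF A(1)] by simp
    with A obtain x where "A = {0, x}"
      unfolding card_2_iff P0_def by auto
    with A False have "g x = y" by (simp add: f_pair doubleton_eq_iff)
    then show ?thesis by blast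
  qed (metis pullback_0 rangeI)
  then show ?thesis by blast
qed

lemma bij_pullback: "bij g"
  using surj_pullback by (simp add: bij_def inj_def)

lemma f_subset_sums: "f (subset_sums xs) = subset_sums (map g xs)"
proof (induction xs)
  case (Cons x xs)
  then show ?case
    by (simp del: subset_sums_Cons add: subset_sums.simps(2) f_setplus f_pair)
qed (simp add: f_zero)

lemma subset_sums_map_pullback_eq_iff:
  "subset_sums (map g xs) = subset_sums (map g ys) \<longleftrightarrow> subset_sums xs = subset_sums ys"
  by (metis f_subset_sums f_eq_iff subset_sums_in_P0)

lemma pullback_double: "g (x + x) = g x + g x"
proof (cases "x = 0")
  case False
  have "subset_sums [x, x, x] = subset_sums [x, x + x]" by (auto simp: add.assoc)
  then have "subset_sums [g x, g x, g x] = subset_sums [g x, g (x + x)]"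
    using subset_sums_map_pullback_eq_iff[of "[x, x, x]" "[x, x + x]"] by simp
  then show ?thesis by (rule subset_sums_eq_imp_double) (use False in simp_all)
qed simp

lemma pullback_uminus: "g (- x) = - g x"
proof (cases "x = 0")
  case False
  have "subset_sums [- x, x, x] = subset_sums [- x, x + x]" by auto
  then have "subset_sums [g (- x), g x, g x] = subset_sums [g (- x), g x + g x]"
    using subset_sums_map_pullback_eq_iff[of "[- x, x, x]" "[- x, x + x]"] by (simp add: pullback_double)
  moreover have "g x + g x = 0" if "g (- x) = g x"
  proof -
    from that have "x + x = 0" by (metis pullback_eq_iff add.right_inverse)
    then show ?thesis by (simp flip: pullback_double)
  qed
  ultimately show ?thesis using False by (intro subset_sums_eq_imp_neg) simp_all
qed simp

lemma pullback_triple: "g (x + x + x) = g x + g x + g x"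
proof (cases "x = 0")
  case False
  have "subset_sums [x, x, x + x + x] = subset_sums [x, x, x, x, x]"
    by (auto simp: algebra_simps)
  then have "subset_sums [g x, g x, g (x + x + x)] = subset_sums [g x, g x, g x, g x, g x]"
    using subset_sums_map_pullback_eq_iff[of "[x, x, x + x + x]" "[x, x, x, x, x]"] by simp
  moreover have "g (x + x + x) \<noteq> g x + g x"
    using False by (simp flip: pullback_double)
  moreover have "g x + g x = 0" if "g (x + x + x) = g x"
    using that by (simp flip: pullback_double)
  moreover have "g x + g x + g x = 0" if "g (x + x + x) = 0"
  proof -
    from that have "x + x = - x" by (simp add: eq_neg_iff_add_eq_0)
    then have "g x + g x = - g x" by (metis pullback_double pullback_uminus)
    then show ?thesis by (simp add: eq_neg_iff_add_eq_0)
  qed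
  ultimately show ?thesis using False by (intro subset_sums_eq_imp_triple) simp_all
qed simp

lemma pullback_add_if_order_2:
  assumes "a + a = 0"
  shows "g (a + b) = g a + g b"
proof (cases "a = 0 \<or> b = 0")
  case False
  have "subset_sums [a, b] = subset_sums [a, a + b]"
    using assms by (auto simp: add.assoc[symmetric])
  then have "subset_sums [g a, g b] = subset_sums [g a, g (a + b)]"
    using subset_sums_map_pullback_eq_iff[of "[a, b]" "[a, a + b]"] by simp
  then show ?thesis by (rule subset_sums_eq_imp_add) (use False in simp_all)
qed auto

lemma pullback_add_if_degenerate:
  assumes "degenerate_pair x y"
  shows "g (x + y) = g x + g y"
  using assms unfolding degenerate_pair_def
  by (auto simp: pullback_add_if_order_2 pullback_double add.assoc[symmetric] pullback_triple)

lemma period_from_pullback_sum: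
  assumes "a + b + c = 0"
  obtains s where "g s = g a + g b + g c"
    and "(+) s ` {0, a, b, c, - a, - b, - c} \<subseteq> {0, a, b, c, - a, - b, - c}"
proof -
  define D where "D = {0, a, b, c, - a, - b, - c}"
  define P where "P = subset_sums [g a, g b, g c]"
  define t where "t = g a + g b + g c"
  have c: "c = - (a + b)" using minus_unique[OF assms] by simp
  have D: "subset_sums [a, b, c] = D" "subset_sums [- a, - b, - c] = D"
    unfolding D_def c by (auto simp: algebra_simps)
  have "(+) (- t) ` P = subset_sums [g (- a), g (- b), g (- c)]"
    unfolding P_def t_def pullback_uminus
    using subset_sums_map_uminus[of "[g a, g b, g c]"] by (simp del: subset_sums_Cons add: add.assoc)
  also have "\<dots> = P"
    using subset_sums_map_pullback_eq_iff[of "[- a, - b, - c]" "[a, b, c]"] D by (simp add: P_def)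
  finally have "(+) t ` P = (+) t ` (+) (- t) ` P" by simp
  then have "(+) t ` P = P" by (simp add: image_image)
  obtain s where s: "g s = t" using surj_pullback by (metis surjD)
  have "subset_sums (map g [s, a, b, c]) = subset_sums (map g [a, b, c])"
    using \<open>(+) t ` P = P\<close> s by (simp add: P_def)
  then have "(+) s ` D \<subseteq> D"
    using subset_sums_map_pullback_eq_iff D by (metis subset_sums_Cons Un_upper2)
  with s show ?thesis using that by (simp add: t_def D_def)
qed

lemma pullback_zero_sum:
  assumes "a + b + c = 0"
  shows "g a + g b + g c = 0"
proof -
  define D where "D = {0, a, b, c, - a, - b, - c}"
  obtain s where s: "g s = g a + g b + g c" and period: "(+) s ` D \<subseteq> D"
    using period_from_pullback_sum[OF assms] unfolding D_def by blast
  have zero_sum_if_period: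
    "g x + g y + g z = 0" if "x + y + z = 0" "{0, x, y, z, - x, - y, - z} = D" "s = x \<or> s = - x"
    for x y z
  proof -
    have "degenerate_pair x y \<or> degenerate_pair y x"
      using degenerate_pair_if_periodic[of x y z s] that period by simp
    then have "g (x + y) = g x + g y"
      using pullback_add_if_degenerate by (metis add.commute)
    moreover have "z = - (x + y)" using minus_unique[OF that(1)] by simp
    ultimately show ?thesis using pullback_uminus[of "x + y"] by simp
  qed
  show ?thesis
  proof (cases "s = 0")
    case False
    have "s \<in> D" using period by (auto simp: D_def)
    with False consider "s = a \<or> s = - a" | "s = b \<or> s = - b" | "s = c \<or> s = - c"
      by (auto simp: D_def)
    then show ?thesis
    proof cases
      case 1 then show ?thesis using zero_sum_if_period[of a b c] assms D_def by simp
    next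
      case 2 then show ?thesis using zero_sum_if_period[of b c a] assms D_def
        by (simp add: insert_commute algebra_simps)
    next
      case 3 then show ?thesis using zero_sum_if_period[of c a b] assms D_def
        by (simp add: insert_commute algebra_simps)
    qed
  qed (use s in simp)
qed

lemma pullback_add: "g (a + b) = g a + g b"
proof -
  have "g a + g b + g (- (a + b)) = 0" by (rule pullback_zero_sum) simp
  then show ?thesis unfolding pullback_uminus by (simp add: algebra_simps)
qed

end

theorem proposition2p6:
  fixes f :: "'a::{ab_group_add, finite} set \<Rightarrow> 'a set"
  assumes "P0_automorphism f"
  shows "group_automorphism (pullback f)"
proof -
  interpret P0_aut f by (rule P0_aut.intro) (rule assms)
  show ?thesis unfolding group_automorphism_def using bij_pullback pullback_add by blast
qed

end
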